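(* For $\lambda\in(0,1)$ and $t\in(0,1)\cup(1,\infty)$ define $\kappa_\lambda(t)=\frac{m_\lambda(t)}{\mathrm{hel}(t)}$. Then for every such $t$ and $\lambda$: (i) $\kappa_\lambda(t)=\kappa_{1-\lambda}(1/t)$; (ii) $L(\lambda)\le\kappa_\lambda(t)\le U(\lambda)$.
   Context: $m_\lambda(t)=\lambda t\ln t-(\lambda t+1-\lambda)\ln(\lambda t+1-\lambda)$ and $\mathrm{hel}(t)=\frac12(\sqrt t-1)^2$ for $t>0$. With $\eta(\lambda)=-\lambda\ln\lambda$, define $L(\lambda)=2\min\{\eta(\lambda),\eta(1-\lambda)\}$ and $U(\lambda)=\frac{2\lambda(1-\lambda)}{1-2\lambda}\ln\frac{1-\lambda}{\lambda}$ for $\lambda\neq 1/2$, with $U(1/2)=1$ (its continuous extension). *)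

theory Defs
  imports Complex_Main
begin

definition m_fun :: "real \<Rightarrow> real \<Rightarrow> real" where
  "m_fun l t = l * t * ln t - (l * t + 1 - l) * ln (l * t + 1 - l)"

definition hel :: "real \<Rightarrow> real" where
  "hel t = (1/2) * (sqrt t - 1)^2"

definition eta :: "real \<Rightarrow> real" where
  "eta l = - l * ln l"

definition L_bound :: "real \<Rightarrow> real" where
  "L_bound l = 2 * min (eta l) (eta (1 - l))"

definition U_bound :: "real \<Rightarrow> real" where
  "U_bound l = (if l = 1/2 then 1
     else (2 * l * (1 - l)) / (1 - 2 * l) * ln ((1 - l) / l))"

definition kappa :: "real \<Rightarrow> real \<Rightarrow> real" where
  "kappa l t = m_fun l t / hel t"

end

(*
  Substituting t = s\<^sup>2 (s > 0) turns hel t into (s - 1)\<^sup>2 / 2, so kappa l t = 2 M(s) / (s - 1)\<^sup>2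
  with M(s) = 2 l s\<^sup>2 ln s - q ln q, q = l s\<^sup>2 + 1 - l.  Part (i) is a direct computation, and by
  (i) together with the symmetry of L and U under l \<mapsto> 1 - l it suffices to treat s > 1.
  Since M(1) = M'(1) = 0 and M''(1) = 4 l (1 - l), comparing 2 M with c (s - 1)\<^sup>2 reduces to comparing
  M'' with c.  Now M'' increases while l s\<^sup>2 \<le> 1 - l and decreases afterwards; it is therefore
  at least min (M''(1), 2 eta l) \<ge> L l, and for l \<ge> 1/2 at most M''(1) \<le> U l.  For l < 1/2 the
  quotient K(s) = 2 M(s) / (s - 1)\<^sup>2 increases up to s = (1 - l) / l and decreases beyond, because
  the numerator (s - 1) M' - 2 M of K' is convex-then-concave with roots 1 and (1 - l) / l; its
  maximum value K((1 - l) / l) is exactly U l.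
*)

theory Submission
  imports Defs "HOL-Analysis.Convex"
begin

lemma nonneg_if_deriv2_nonneg:
  fixes f f' f'' :: "real \<Rightarrow> real"
  assumes "a \<le> b"
    and "\<And>x. x \<in> {a..b} \<Longrightarrow> (f has_real_derivative f' x) (at x)"
    and "\<And>x. x \<in> {a..b} \<Longrightarrow> (f' has_real_derivative f'' x) (at x)"
    and "\<And>x. x \<in> {a..b} \<Longrightarrow> 0 \<le> f'' x"
    and "0 \<le> f a" "0 \<le> f' a"
  shows "0 \<le> f b"
proof -
  have "f' a * (b - a) \<le> f b - f a"
    by (rule f''_imp_f'[of "{a..b}" f f' f'']) (use assms in auto)
  moreover have "0 \<le> f' a * (b - a)"
    using assms by simp
  ultimately show ?thesis
    using \<open>0 \<le> f a\<close> by linarith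
qed

lemma concave_on_sign_around_root:
  fixes f :: "real \<Rightarrow> real"
  assumes conc: "concave_on {a..} f" and "0 \<le> f a" "a < r" "f r = 0"
  shows "\<lbrakk>a \<le> x; x \<le> r\<rbrakk> \<Longrightarrow> 0 \<le> f x"
    and "r \<le> x \<Longrightarrow> f x \<le> 0"
proof -
  have conc_Icc: "concave_on {a..b} f" for b
    using conc unfolding concave_on_def by (rule convex_on_subset) auto
  show "0 \<le> f x" if "a \<le> x" "x \<le> r"
    using concave_on_ge_min[OF conc_Icc, of x r] that assms by simp
  show "f x \<le> 0" if "r \<le> x"
  proof -
    define c where "c = (r - a) / (x - a)"
    have c: "0 < c" "c \<le> 1"
      using that \<open>a < r\<close> unfolding c_def by (auto simp: field_simps)
    have "(f x - f a) / (x - a) * (r - a) + f a \<le> f r"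
      using concave_onD_Icc'[OF conc_Icc, of r x] that \<open>a < r\<close> by simp
    moreover have "(f x - f a) / (x - a) * (r - a) + f a = c * f x + (1 - c) * f a"
      using that \<open>a < r\<close> unfolding c_def by (simp add: divide_simps) (simp add: algebra_simps)
    ultimately have "c * f x + (1 - c) * f a \<le> 0"
      using \<open>f r = 0\<close> by simp
    moreover have "0 \<le> (1 - c) * f a"
      using c \<open>0 \<le> f a\<close> by simp
    ultimately show ?thesis
      using c by (smt (verit) mult_pos_pos)
  qed
qed

lemma eta_le_one_minus: "0 < x \<Longrightarrow> eta x \<le> 1 - x"
  using ln_le_minus_one[of "1 / x"] by (simp add: eta_def ln_div field_simps)

lemma L_bound_commute: "L_bound (1 - l) = L_bound l"
  unfolding L_bound_def by (simp add: min.commute)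

lemma L_bound_le:
  assumes "0 < l" "l < 1"
  shows "L_bound l \<le> 4 * l * (1 - l)"
proof -
  have "L_bound l \<le> 2 * min (1 - l) l"
    using min.mono[OF eta_le_one_minus[of l] eta_le_one_minus[of "1 - l"]] assms
    unfolding L_bound_def by simp
  also have "\<dots> \<le> 4 * l * (1 - l)"
    using mult_nonneg_nonneg[of "2 * l - 1" "1 - l"] mult_nonneg_nonneg[of "1 - 2 * l" l] assms
    by (auto simp: min_def algebra_simps)
  finally show ?thesis .
qed

lemma U_bound_commute:
  fixes l :: real
  assumes "0 < l" "l < 1"
  shows "U_bound (1 - l) = U_bound l"
proof (cases "l = 1/2")
  case False
  have "ln (l / (1 - l)) = - ln ((1 - l) / l)"
    using assms by (simp add: ln_div)
  then show ?thesis
    using False unfolding U_bound_def by (simp add: divide_simps algebra_simps)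
qed (simp only: U_bound_def, simp)

lemma ln_odds_ge:
  fixes l :: real
  assumes "0 < l" "l \<le> 1/2"
  shows "2 * (1 - 2 * l) \<le> ln ((1 - l) / l)"
proof -
  define g where "g x = ln (1 - x) - ln x + 4 * x" for x :: real
  have "g (1/2) \<le> g l"
  proof (rule deriv_nonpos_imp_antimono[of l "1/2" g "\<lambda>x. 4 - 1 / (1 - x) - 1 / x"])
    fix x :: real assume x: "x \<in> {l..1/2}"
    then show "(g has_real_derivative 4 - 1 / (1 - x) - 1 / x) (at x)"
      using assms unfolding g_def by (auto intro!: derivative_eq_intros)
    have "4 * x * (1 - x) \<le> 1"
      using zero_le_power2[of "2 * x - 1"] by (simp add: power2_eq_square algebra_simps)
    then show "4 - 1 / (1 - x) - 1 / x \<le> 0"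
      using x assms by (simp add: field_simps)
  qed (use assms in auto)
  then show ?thesis
    using assms unfolding g_def by (simp add: ln_div)
qed

lemma U_bound_ge:
  fixes l :: real
  assumes "0 < l" "l < 1"
  shows "4 * l * (1 - l) \<le> U_bound l"
proof -
  have below_half: "4 * l * (1 - l) \<le> U_bound l" if "0 < l" "l < 1/2" for l :: real
  proof -
    have "4 * l * (1 - l) = 2 * l * (1 - l) / (1 - 2 * l) * (2 * (1 - 2 * l))"
      using that by (simp add: field_simps)
    also have "\<dots> \<le> 2 * l * (1 - l) / (1 - 2 * l) * ln ((1 - l) / l)"
      using ln_odds_ge[of l] that by (intro mult_left_mono) auto
    finally show ?thesis
      using that unfolding U_bound_def by simp
  qed
  consider "l < 1/2" | "l = 1/2" | "1 - l < 1/2"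
    by linarith
  then show ?thesis
  proof cases
    case 1
    then show ?thesis
      using below_half assms by simp
  next
    case 2
    then show ?thesis
      by (simp only: U_bound_def 2) simp
  next
    case 3
    then show ?thesis
      using below_half[of "1 - l"] U_bound_commute assms by (simp add: mult_ac)
  qed
qed

definition mix_sq :: "real \<Rightarrow> real \<Rightarrow> real" where
  "mix_sq l s = l * s\<^sup>2 + 1 - l"

text \<open>\<open>m_sq l s = m_fun l (s\<^sup>2)\<close>; the primed constants are its successive derivatives in \<open>s\<close>.\<close>

definition m_sq :: "real \<Rightarrow> real \<Rightarrow> real" where
  "m_sq l s = 2 * l * s\<^sup>2 * ln s - mix_sq l s * ln (mix_sq l s)"

definition m_sq' :: "real \<Rightarrow> real \<Rightarrow> real" where
  "m_sq' l s = 2 * l * s * (2 * ln s - ln (mix_sq l s))"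

definition m_sq'' :: "real \<Rightarrow> real \<Rightarrow> real" where
  "m_sq'' l s = 2 * l * (2 * ln s - ln (mix_sq l s)) + 4 * l * (1 - l) / mix_sq l s"

definition m_sq''' :: "real \<Rightarrow> real \<Rightarrow> real" where
  "m_sq''' l s = 4 * l * (1 - l) * (1 - l - l * s\<^sup>2) / (s * (mix_sq l s)\<^sup>2)"

lemma mix_sq_pos: "0 < l \<Longrightarrow> l < 1 \<Longrightarrow> 0 < mix_sq l s"
  unfolding mix_sq_def by (smt (verit) mult_nonneg_nonneg zero_le_power2)

lemma m_sq_at_1 [simp]:
  "mix_sq l 1 = 1" "m_sq l 1 = 0" "m_sq' l 1 = 0" "m_sq'' l 1 = 4 * l * (1 - l)"
  by (simp_all add: mix_sq_def m_sq_def m_sq'_def m_sq''_def)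

lemma DERIV_m_sq:
  assumes "0 < l" "l < 1" "0 < s"
  shows "(m_sq l has_real_derivative m_sq' l s) (at s)"
proof -
  have q: "0 < mix_sq l s"
    using mix_sq_pos assms by auto
  have "((\<lambda>s. 2 * l * s\<^sup>2 * ln s - (l * s\<^sup>2 + 1 - l) * ln (l * s\<^sup>2 + 1 - l))
      has_real_derivative 2 * l * (2 * s) * ln s + 2 * l * s\<^sup>2 * (1 / s)
        - (l * (2 * s) * ln (mix_sq l s) + mix_sq l s * (l * (2 * s) / mix_sq l s))) (at s)"
    using q assms unfolding mix_sq_def by (auto intro!: derivative_eq_intros simp: power2_eq_square)
  moreover have "2 * l * (2 * s) * ln s + 2 * l * s\<^sup>2 * (1 / s)
      - (l * (2 * s) * ln (mix_sq l s) + mix_sq l s * (l * (2 * s) / mix_sq l s)) = m_sq' l s"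
    using q assms unfolding m_sq'_def by (simp add: field_simps power2_eq_square)
  ultimately show ?thesis
    unfolding m_sq_def mix_sq_def[abs_def] by simp
qed

lemma DERIV_m_sq':
  assumes "0 < l" "l < 1" "0 < s"
  shows "(m_sq' l has_real_derivative m_sq'' l s) (at s)"
proof -
  have q: "0 < mix_sq l s"
    using mix_sq_pos assms by auto
  have "((\<lambda>s. 2 * l * s * (2 * ln s - ln (l * s\<^sup>2 + 1 - l))) has_real_derivative
      2 * l * (2 * ln s - ln (mix_sq l s)) + 2 * l * s * (2 * (1 / s) - l * (2 * s) / mix_sq l s)) (at s)"
    using q assms unfolding mix_sq_def by (auto intro!: derivative_eq_intros simp: power2_eq_square)
  moreover have "2 * l * (2 * ln s - ln (mix_sq l s)) + 2 * l * s * (2 * (1 / s) - l * (2 * s) / mix_sq l s)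
      = m_sq'' l s"
  proof -
    have e: "1 - l = mix_sq l s - l * s\<^sup>2"
      by (simp add: mix_sq_def)
    show ?thesis
      using q assms unfolding m_sq''_def e by (simp add: field_simps power2_eq_square)
  qed
  ultimately show ?thesis
    unfolding m_sq'_def mix_sq_def[abs_def] by simp
qed

lemma DERIV_m_sq'':
  assumes "0 < l" "l < 1" "0 < s"
  shows "(m_sq'' l has_real_derivative m_sq''' l s) (at s)"
proof -
  have q: "0 < mix_sq l s"
    using mix_sq_pos assms by auto
  have "((\<lambda>s. 2 * l * (2 * ln s - ln (l * s\<^sup>2 + 1 - l)) + 4 * l * (1 - l) / (l * s\<^sup>2 + 1 - l))
      has_real_derivative 2 * l * (2 * (1 / s) - l * (2 * s) / mix_sq l s)
        - 4 * l * (1 - l) * (l * (2 * s)) / (mix_sq l s)\<^sup>2) (at s)"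
    using q assms unfolding mix_sq_def
    by (auto intro!: derivative_eq_intros simp: power2_eq_square mult_ac)
  moreover have "2 * l * (2 * (1 / s) - l * (2 * s) / mix_sq l s)
      - 4 * l * (1 - l) * (l * (2 * s)) / (mix_sq l s)\<^sup>2 = m_sq''' l s"
  proof -
    have e: "1 - l = mix_sq l s - l * s\<^sup>2"
      by (simp add: mix_sq_def)
    show ?thesis
      using q assms unfolding m_sq'''_def e by (simp add: field_simps power2_eq_square)
  qed
  ultimately show ?thesis
    unfolding m_sq''_def mix_sq_def[abs_def] by simp
qed

lemma m_sq'''_nonneg:
  assumes "l * s\<^sup>2 \<le> 1 - l" "0 < l" "l < 1" "0 < s"
  shows "0 \<le> m_sq''' l s"
  using assms mix_sq_pos[of l s] unfolding m_sq'''_def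
  by (auto intro!: divide_nonneg_pos mult_nonneg_nonneg)

lemma m_sq'''_nonpos:
  assumes "1 - l \<le> l * s\<^sup>2" "0 < l" "l < 1" "0 < s"
  shows "m_sq''' l s \<le> 0"
  using assms mix_sq_pos[of l s] unfolding m_sq'''_def
  by (intro divide_nonpos_pos mult_nonneg_nonpos) auto

lemma m_sq''_ge_at_1:
  assumes "0 < l" "l < 1" "1 \<le> s" "l * s\<^sup>2 \<le> 1 - l"
  shows "m_sq'' l 1 \<le> m_sq'' l s"
proof (rule deriv_nonneg_imp_mono[of 1 s "m_sq'' l" "m_sq''' l"])
  fix x assume x: "x \<in> {1..s}"
  then show "(m_sq'' l has_real_derivative m_sq''' l x) (at x)"
    using assms by (intro DERIV_m_sq'') auto
  have "l * x\<^sup>2 \<le> l * s\<^sup>2"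
    using x assms by (intro mult_left_mono power_mono) auto
  then have "l * x\<^sup>2 \<le> 1 - l"
    using assms by linarith
  then show "0 \<le> m_sq''' l x"
    using x assms by (intro m_sq'''_nonneg) auto
qed (use assms in auto)

lemma m_sq''_le_at_1:
  assumes "0 < l" "l < 1" "1 \<le> s" "1/2 \<le> l"
  shows "m_sq'' l s \<le> m_sq'' l 1"
proof (rule deriv_nonpos_imp_antimono[of 1 s "m_sq'' l" "m_sq''' l"])
  fix x assume x: "x \<in> {1..s}"
  then show "(m_sq'' l has_real_derivative m_sq''' l x) (at x)"
    using assms by (intro DERIV_m_sq'') auto
  have "l \<le> l * x\<^sup>2"
    using x assms by simp
  then have "1 - l \<le> l * x\<^sup>2"
    using assms by linarith
  then show "m_sq''' l x \<le> 0"
    using x assms by (intro m_sq'''_nonpos) auto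
qed (use assms in auto)

text \<open>With \<open>y = l s\<^sup>2 / mix_sq l s \<in> [1/2, 1]\<close>, this is \<open>ln y + 2 (1 - y) \<ge> 0\<close>.\<close>

lemma m_sq''_ge_eta:
  assumes "0 < l" "l < 1" "0 < s" "1 - l \<le> l * s\<^sup>2"
  shows "2 * eta l \<le> m_sq'' l s"
proof -
  define q where "q = mix_sq l s"
  have q: "0 < q"
    using mix_sq_pos assms unfolding q_def by auto
  define y where "y = l * s\<^sup>2 / q"
  have y: "1 - y = (1 - l) / q" "0 < y" "1/2 \<le> y" "y \<le> 1"
    using q assms unfolding y_def q_def mix_sq_def by (auto simp: field_simps)
  have "1 - 1 / y \<le> ln y"
    using ln_le_minus_one[of "1 / y"] y by (simp add: ln_div)
  moreover have "0 \<le> 1 - 1 / y + 2 * (1 - y)"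
    using y mult_nonneg_nonneg[of "2 * y - 1" "1 - y"] by (simp add: field_simps)
  ultimately have "0 \<le> 2 * l * (ln y + 2 * (1 - l) / q)"
    using y assms by simp
  moreover have "m_sq'' l s - 2 * eta l = 2 * l * (ln y + 2 * (1 - l) / q)"
  proof -
    have "ln y = ln l + 2 * ln s - ln q"
      using assms q unfolding y_def by (simp add: ln_div ln_mult ln_realpow)
    then show ?thesis
      unfolding m_sq''_def eta_def q_def by (simp only:) (simp add: algebra_simps)
  qed
  ultimately show ?thesis
    using assms by simp
qed

lemma L_bound_le_m_sq'':
  assumes "0 < l" "l < 1" "1 \<le> s"
  shows "L_bound l \<le> m_sq'' l s"
proof (cases "l * s\<^sup>2 \<le> 1 - l")
  case True
  then show ?thesis
    using m_sq''_ge_at_1 L_bound_le assms by fastforce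
next
  case False
  then have "2 * eta l \<le> m_sq'' l s"
    using assms by (intro m_sq''_ge_eta) auto
  then show ?thesis
    unfolding L_bound_def by linarith
qed

lemma L_bound_mult_le_m_sq:
  assumes "0 < l" "l < 1" "1 \<le> s"
  shows "L_bound l * (s - 1)\<^sup>2 \<le> 2 * m_sq l s"
proof -
  let ?L = "L_bound l"
  have "0 \<le> 2 * m_sq l s - ?L * (s - 1)\<^sup>2"
  proof (rule nonneg_if_deriv2_nonneg[of 1 s "\<lambda>x. 2 * m_sq l x - ?L * (x - 1)\<^sup>2"
        "\<lambda>x. 2 * m_sq' l x - 2 * ?L * (x - 1)" "\<lambda>x. 2 * m_sq'' l x - 2 * ?L"])
    fix x assume x: "x \<in> {1..s}"
    then show "((\<lambda>x. 2 * m_sq l x - ?L * (x - 1)\<^sup>2) has_real_derivative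
        2 * m_sq' l x - 2 * ?L * (x - 1)) (at x)"
      using assms by (auto intro!: derivative_eq_intros DERIV_m_sq)
    show "((\<lambda>x. 2 * m_sq' l x - 2 * ?L * (x - 1)) has_real_derivative 2 * m_sq'' l x - 2 * ?L) (at x)"
      using x assms by (auto intro!: derivative_eq_intros DERIV_m_sq')
    show "0 \<le> 2 * m_sq'' l x - 2 * ?L"
      using L_bound_le_m_sq'' x assms by fastforce
  qed (use assms in auto)
  then show ?thesis
    by simp
qed

lemma m_sq_le_U_bound_mult:
  assumes "0 < l" "l < 1" "1 \<le> s" "1/2 \<le> l"
  shows "2 * m_sq l s \<le> U_bound l * (s - 1)\<^sup>2"
proof -
  let ?U = "U_bound l"
  have "0 \<le> ?U * (s - 1)\<^sup>2 - 2 * m_sq l s"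
  proof (rule nonneg_if_deriv2_nonneg[of 1 s "\<lambda>x. ?U * (x - 1)\<^sup>2 - 2 * m_sq l x"
        "\<lambda>x. 2 * ?U * (x - 1) - 2 * m_sq' l x" "\<lambda>x. 2 * ?U - 2 * m_sq'' l x"])
    fix x assume x: "x \<in> {1..s}"
    then show "((\<lambda>x. ?U * (x - 1)\<^sup>2 - 2 * m_sq l x) has_real_derivative
        2 * ?U * (x - 1) - 2 * m_sq' l x) (at x)"
      using assms by (auto intro!: derivative_eq_intros DERIV_m_sq)
    show "((\<lambda>x. 2 * ?U * (x - 1) - 2 * m_sq' l x) has_real_derivative 2 * ?U - 2 * m_sq'' l x) (at x)"
      using x assms by (auto intro!: derivative_eq_intros DERIV_m_sq')
    show "0 \<le> 2 * ?U - 2 * m_sq'' l x"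
      using m_sq''_le_at_1[of l x] U_bound_ge[of l] x assms by simp
  qed (use assms in auto)
  then show ?thesis
    by simp
qed

definition kappa_sq :: "real \<Rightarrow> real \<Rightarrow> real" where
  "kappa_sq l s = 2 * m_sq l s / (s - 1)\<^sup>2"

definition kappa_sq_numer :: "real \<Rightarrow> real \<Rightarrow> real" where
  "kappa_sq_numer l s = (s - 1) * m_sq' l s - 2 * m_sq l s"

lemma DERIV_kappa_sq:
  assumes "0 < l" "l < 1" "1 < s"
  shows "(kappa_sq l has_real_derivative 2 * kappa_sq_numer l s / (s - 1) ^ 3) (at s)"
proof -
  have quotient: "(2 * a * d\<^sup>2 - 2 * b * (2 * d)) / (d\<^sup>2)\<^sup>2 = 2 * (d * a - 2 * b) / d ^ 3"
    if "d \<noteq> 0" for a b d :: real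
    using that by (simp add: field_simps power2_eq_square power3_eq_cube)
  have "((\<lambda>s. 2 * m_sq l s / (s - 1)\<^sup>2) has_real_derivative
      (2 * m_sq' l s * (s - 1)\<^sup>2 - 2 * m_sq l s * (2 * (s - 1))) / ((s - 1)\<^sup>2)\<^sup>2) (at s)"
    using assms by (auto intro!: derivative_eq_intros DERIV_m_sq simp: power2_eq_square)
  moreover have "(2 * m_sq' l s * (s - 1)\<^sup>2 - 2 * m_sq l s * (2 * (s - 1))) / ((s - 1)\<^sup>2)\<^sup>2
      = 2 * kappa_sq_numer l s / (s - 1) ^ 3"
    using quotient[of "s - 1"] assms unfolding kappa_sq_numer_def by simp
  ultimately show ?thesis
    unfolding kappa_sq_def[abs_def] by simp
qed

lemma DERIV_kappa_sq_numer:
  assumes "0 < l" "l < 1" "0 < s"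
  shows "(kappa_sq_numer l has_real_derivative (s - 1) * m_sq'' l s - m_sq' l s) (at s)"
  unfolding kappa_sq_numer_def[abs_def]
  using assms by (auto intro!: derivative_eq_intros DERIV_m_sq DERIV_m_sq')

lemma DERIV_kappa_sq_numer':
  assumes "0 < l" "l < 1" "0 < s"
  shows "((\<lambda>s. (s - 1) * m_sq'' l s - m_sq' l s) has_real_derivative (s - 1) * m_sq''' l s) (at s)"
  using assms by (auto intro!: derivative_eq_intros DERIV_m_sq' DERIV_m_sq'')

lemma mix_sq_odds: "0 < l \<Longrightarrow> mix_sq l ((1 - l) / l) = (1 - l) / l"
  unfolding mix_sq_def by (simp add: field_simps power2_eq_square)

lemma kappa_sq_numer_odds:
  assumes "0 < l"
  shows "kappa_sq_numer l ((1 - l) / l) = 0"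
proof -
  define r where "r = (1 - l) / l"
  have "l * r = 1 - l"
    using assms unfolding r_def by simp
  moreover have "kappa_sq_numer l r = 2 * r * ln r * (1 - l - l * r)"
    using mix_sq_odds[OF assms] unfolding kappa_sq_numer_def m_sq'_def m_sq_def r_def[symmetric]
    by (simp add: algebra_simps power2_eq_square)
  ultimately show ?thesis
    unfolding r_def by simp
qed

lemma kappa_sq_odds:
  assumes "0 < l" "l < 1/2"
  shows "kappa_sq l ((1 - l) / l) = U_bound l"
proof -
  define r where "r = (1 - l) / l"
  have lr: "l * r = 1 - l"
    using assms unfolding r_def by simp
  have "m_sq l r = 2 * (l * r) * r * ln r - r * ln r"
    using mix_sq_odds[OF assms(1)] unfolding m_sq_def r_def[symmetric]
    by (simp add: power2_eq_square)
  then have m: "m_sq l r = r * (1 - 2 * l) * ln r"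
    unfolding lr by (simp add: algebra_simps)
  have r1: "r - 1 = (1 - 2 * l) / l"
    using assms unfolding r_def by (simp add: field_simps)
  have "kappa_sq l r = 2 * (r * (1 - 2 * l) * ln r) / ((1 - 2 * l) / l)\<^sup>2"
    unfolding kappa_sq_def m r1 ..
  also have "\<dots> = 2 * l * (l * r) / (1 - 2 * l) * ln r"
  proof -
    have "2 * (r * c * L) / (c / l)\<^sup>2 = 2 * l * (l * r) / c * L" if "c \<noteq> 0" for c L
      using that assms by (simp add: field_simps power2_eq_square)
    then show ?thesis
      using assms by simp
  qed
  finally have "kappa_sq l r = 2 * l * (l * r) / (1 - 2 * l) * ln r" .
  then show ?thesis
    unfolding lr
    using assms unfolding U_bound_def r_def by simp
qed

text \<open>The second derivative of \<open>kappa_sq_numer l\<close> has the sign of \<open>1 - l - l s\<^sup>2\<close>, so the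
  function is convex up to \<open>s\<^sub>0 = sqrt ((1 - l) / l)\<close> and concave beyond; as it vanishes
  with its derivative at \<open>1\<close>, its only root in \<open>(1, \<infinity>)\<close> is \<open>(1 - l) / l\<close>.\<close>

lemma kappa_sq_numer_sign:
  assumes "0 < l" "l < 1/2"
  shows "\<lbrakk>1 \<le> s; s \<le> (1 - l) / l\<rbrakk> \<Longrightarrow> 0 \<le> kappa_sq_numer l s"
    and "(1 - l) / l \<le> s \<Longrightarrow> kappa_sq_numer l s \<le> 0"
proof -
  define r where "r = (1 - l) / l"
  define s\<^sub>0 where "s\<^sub>0 = sqrt r"
  have "1 < r"
    using assms unfolding r_def by (simp add: field_simps)
  then have s\<^sub>0: "s\<^sub>0\<^sup>2 = r" "1 < s\<^sub>0" "s\<^sub>0 < r"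
    unfolding s\<^sub>0_def using real_sqrt_less_mono[of r "r\<^sup>2"] by (auto simp: power2_eq_square)
  have lr: "l * r = 1 - l"
    using assms unfolding r_def by simp
  let ?N' = "\<lambda>s. (s - 1) * m_sq'' l s - m_sq' l s"
  have convex_part: "0 \<le> kappa_sq_numer l x" if "1 \<le> x" "x \<le> s\<^sub>0" for x
  proof (rule nonneg_if_deriv2_nonneg[of 1 x _ ?N' "\<lambda>s. (s - 1) * m_sq''' l s"])
    fix y assume y: "y \<in> {1..x}"
    then show "(kappa_sq_numer l has_real_derivative ?N' y) (at y)"
      using assms by (intro DERIV_kappa_sq_numer) auto
    show "(?N' has_real_derivative (y - 1) * m_sq''' l y) (at y)"
      using y assms by (intro DERIV_kappa_sq_numer') auto
    have "l * y\<^sup>2 \<le> l * s\<^sub>0\<^sup>2"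
      using y that assms by (intro mult_left_mono power_mono) auto
    then have "l * y\<^sup>2 \<le> 1 - l"
      using s\<^sub>0 lr by simp
    then show "0 \<le> (y - 1) * m_sq''' l y"
      using y assms by (simp add: m_sq'''_nonneg)
  qed (use that in \<open>auto simp: kappa_sq_numer_def\<close>)
  have "concave_on {s\<^sub>0..} (kappa_sq_numer l)"
  proof (rule f''_le0_imp_concave[of _ _ ?N' "\<lambda>s. (s - 1) * m_sq''' l s"])
    fix y assume y: "y \<in> {s\<^sub>0..}"
    then show "(kappa_sq_numer l has_real_derivative ?N' y) (at y)"
      using s\<^sub>0 assms by (intro DERIV_kappa_sq_numer) auto
    show "(?N' has_real_derivative (y - 1) * m_sq''' l y) (at y)"
      using y s\<^sub>0 assms by (intro DERIV_kappa_sq_numer') auto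
    have "l * s\<^sub>0\<^sup>2 \<le> l * y\<^sup>2"
      using y s\<^sub>0 assms by (intro mult_left_mono power_mono) auto
    then have "1 - l \<le> l * y\<^sup>2"
      using s\<^sub>0 lr by simp
    then show "(y - 1) * m_sq''' l y \<le> 0"
      using y s\<^sub>0 assms by (simp add: mult_nonneg_nonpos m_sq'''_nonpos)
  qed simp
  note concave_part = concave_on_sign_around_root[OF this convex_part[of s\<^sub>0] s\<^sub>0(3)]
  show "0 \<le> kappa_sq_numer l s" if "1 \<le> s" "s \<le> (1 - l) / l"
    using convex_part concave_part(1) kappa_sq_numer_odds assms that s\<^sub>0
    unfolding r_def by (cases "s \<le> s\<^sub>0") auto
  show "kappa_sq_numer l s \<le> 0" if "(1 - l) / l \<le> s"
    using concave_part(2) kappa_sq_numer_odds assms that s\<^sub>0 unfolding r_def by auto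
qed

lemma kappa_sq_le_U_bound:
  assumes "0 < l" "l < 1/2" "1 < s"
  shows "kappa_sq l s \<le> U_bound l"
proof -
  define r where "r = (1 - l) / l"
  have "1 < r"
    using assms unfolding r_def by (simp add: field_simps)
  let ?K' = "\<lambda>x. 2 * kappa_sq_numer l x / (x - 1) ^ 3"
  have "kappa_sq l s \<le> kappa_sq l r"
  proof (cases "s \<le> r")
    case True
    show ?thesis
    proof (rule deriv_nonneg_imp_mono[of s r _ ?K'])
      fix x assume "x \<in> {s..r}"
      then show "(kappa_sq l has_real_derivative ?K' x) (at x)" "0 \<le> ?K' x"
        using assms kappa_sq_numer_sign(1)[of l x] unfolding r_def
        by (auto intro!: DERIV_kappa_sq)
    qed (use True in auto)
  next
    case False
    show ?thesis
    proof (rule deriv_nonpos_imp_antimono[of r s _ ?K'])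
      fix x assume x: "x \<in> {r..s}"
      then have "1 < x"
        using \<open>1 < r\<close> by simp
      then show "(kappa_sq l has_real_derivative ?K' x) (at x)" "?K' x \<le> 0"
        using assms x kappa_sq_numer_sign(2)[of l x] unfolding r_def
        by (auto intro!: DERIV_kappa_sq divide_nonpos_pos)
    qed (use False in auto)
  qed
  then show ?thesis
    using kappa_sq_odds assms unfolding r_def by simp
qed

lemma kappa_sq_bounds:
  assumes "0 < l" "l < 1" "1 < s"
  shows "L_bound l \<le> kappa_sq l s \<and> kappa_sq l s \<le> U_bound l"
proof
  have pos: "0 < (s - 1)\<^sup>2"
    using assms by simp
  show "L_bound l \<le> kappa_sq l s"
    using L_bound_mult_le_m_sq[of l s] assms pos unfolding kappa_sq_def
    by (simp add: pos_le_divide_eq)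
  show "kappa_sq l s \<le> U_bound l"
  proof (cases "1/2 \<le> l")
    case True
    then show ?thesis
      using m_sq_le_U_bound_mult[of l s] assms pos unfolding kappa_sq_def
      by (simp add: pos_divide_le_eq)
  next
    case False
    then show ?thesis
      using kappa_sq_le_U_bound assms by simp
  qed
qed

lemma kappa_sq_eq_kappa: "0 < s \<Longrightarrow> kappa l (s\<^sup>2) = kappa_sq l s"
  unfolding kappa_def kappa_sq_def m_fun_def hel_def m_sq_def mix_sq_def
  by (simp add: ln_realpow)

lemma kappa_bounds_gt_1:
  assumes "0 < l" "l < 1" "1 < t"
  shows "L_bound l \<le> kappa l t \<and> kappa l t \<le> U_bound l"
  using kappa_sq_bounds[of l "sqrt t"] kappa_sq_eq_kappa[of "sqrt t" l] assms by simp

lemma m_fun_swap: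
  assumes "0 < l" "l < 1" "0 < t"
  shows "m_fun (1 - l) (1 / t) = m_fun l t / t"
proof -
  define q where "q = l * t + 1 - l"
  have "0 < q"
    using assms unfolding q_def by (smt (verit) mult_pos_pos)
  have "(1 - l) * (1 / t) + 1 - (1 - l) = q / t"
    using assms unfolding q_def by (simp add: field_simps)
  then have "m_fun (1 - l) (1 / t) = ((1 - l) * (- ln t) - q * (ln q - ln t)) / t"
    using assms \<open>0 < q\<close> unfolding m_fun_def by (simp add: ln_div field_simps)
  also have "\<dots> = m_fun l t / t"
    unfolding m_fun_def q_def[symmetric] by (simp add: q_def algebra_simps)
  finally show ?thesis .
qed

lemma hel_inverse: "0 < t \<Longrightarrow> hel (1 / t) = hel t / t"
  unfolding hel_def by (simp add: real_sqrt_divide field_simps power2_eq_square)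

lemma kappa_swap:
  assumes "0 < l" "l < 1" "0 < t"
  shows "kappa (1 - l) (1 / t) = kappa l t"
  using assms unfolding kappa_def m_fun_swap[OF assms] hel_inverse[OF assms(3)] by simp

theorem lemma2:
  fixes l t :: real
  assumes "0 < l" "l < 1" "0 < t" "t \<noteq> 1"
  shows "kappa l t = kappa (1 - l) (1 / t)
    \<and> L_bound l \<le> kappa l t \<and> kappa l t \<le> U_bound l"
proof -
  have swap: "kappa l t = kappa (1 - l) (1 / t)"
    using kappa_swap assms by simp
  consider "1 < t" | "1 < 1 / t"
    using assms by (cases "1 < t") (auto simp: field_simps)
  then show ?thesis
  proof cases
    case 1
    then show ?thesis
      using swap kappa_bounds_gt_1[OF assms(1,2) 1] by simp
  next
    case 2
    then show ?thesis
      using swap kappa_bounds_gt_1[of "1 - l" "1 / t"] L_bound_commute U_bound_commute assms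
      by simp
  qed
qed

end
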